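(* Let $\hat W^{\rm opt}$ be the optimal value of (P1) and let $\hat W=\max\{\hat W^{\rm narrow},\hat W^{\rm opt,wide}\}$, i.e. the value obtained by Algorithm I when Algorithm IIb is replaced by an exact (exhaustive) optimization of (P1) restricted to pairs in $\mathcal M^{\rm wide}$. Then $\hat W\ge\hat W^{\rm opt}/(1+T+\Delta+2J)$ if $\mathcal M^{\rm wide}=\emptyset$, and $\hat W\ge\hat W^{\rm opt}/(2+T+\Delta+2J)$ otherwise.
   Context: Setup. Users $\{1,\dots,K\}$ partitioned into groups $\mathcal G_1,\dots,\mathcal G_L$; $N$ RBs; a chunk is a vector $c\in\{0,1\}^N$ whose ones form a nonempty contiguous block, ${\rm Tail}(c)$ its last index; $\mathcal U$ the family of nonempty $U\subseteq\{1,\dots,K\}$ with $|U|\le T$ and $|U\cap\mathcal G_s|\le1$ for all $s$; pairs are elements of $\mathcal M=\mathcal U\times\mathcal C$. Metrics $p(U,c)\ge0$; weights $\beta^q(U,c)\in[0,1]$ ($q=1,\dots,J$); binary weights $\alpha^q(U,c)\in\{0,1\}$ ($q\in\mathcal I$, finite) with $\sum_{q\in\mathcal I}\alpha^q(U,c)\le\Delta$ per pair. A set $F$ of pairs is feasible if each group meets $U$ for at most one $(U,c)\in F$, each RB lies in $c$ for at most one $(U,c)\in F$, $\sum_F\beta^q\le1$ ($q\le J$), $\sum_F\alpha^q\le1$ ($q\in\mathcal I$); (P1) maximizes $\sum_F p$ over feasible $F$. Pairs conflict if some group meets both user sets, or the chunks share an RB, or some $q\in\mathcal I$ has both $\alpha^q$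 equal to 1. $\mathcal M^{\rm narrow}=\{(U,c):\beta^q(U,c)\le1/2\ \forall q\}$, $\mathcal M^{\rm wide}=\mathcal M\setminus\mathcal M^{\rm narrow}$; $\hat W^{\rm opt,wide}$ is the optimum of (P1) restricted to pairs in $\mathcal M^{\rm wide}$ (0 if empty); $\max_{q\le J}\beta^q:=0$ if $J=0$. $\hat W^{\rm narrow}$ is the value of the output of Algorithm IIa: set $p'=p$ on $\mathcal M^{\rm narrow}$, empty stack $S$; for $j=1,\dots,N$, let $(U^*,c^* )$ maximize $p'$ over pairs of $\mathcal M^{\rm narrow}$ with ${\rm Tail}(c)=j$; if $\hat p=p'(U^*,c^* )>0$, push it on $S$ and for each $(U,c)\in\mathcal M^{\rm narrow}$ with $p'(U,c)>0$ subtract $\hat p$ if it conflicts with $(U^*,c^* )$, else subtract $2\hat p\max_q\beta^q(U,c)$. Then pop $S$ from the top, adding each popped pair to an initially empty $S'$ if $S'$ plus it is feasible; $\hat W^{\rm narrow}=\sum_{S'}p$. *)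

theory Defs
  imports Complex_Main
begin

type_synonym pair = "nat set \<times> nat set"

definition groupset :: "nat \<Rightarrow> (nat \<Rightarrow> nat) \<Rightarrow> nat \<Rightarrow> nat set" where
  "groupset K g s = {k \<in> {1..K}. g k = s}"

text \<open>Chunks over RBs 1..N, identified with the (nonempty, contiguous) set of their ones.\<close>
definition chunks :: "nat \<Rightarrow> nat set set" where
  "chunks N = {{a..b} | a b. 1 \<le> a \<and> a \<le> b \<and> b \<le> N}"

definition tail :: "nat set \<Rightarrow> nat" where
  "tail c = Max c"

definition userSets :: "nat \<Rightarrow> (nat \<Rightarrow> nat) \<Rightarrow> nat \<Rightarrow> nat \<Rightarrow> nat set set" where
  "userSets K g L T = {U. U \<noteq> {} \<and> U \<subseteq> {1..K} \<and> card U \<le> T \<and>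
      (\<forall>s\<in>{1..L}. card (U \<inter> groupset K g s) \<le> 1)}"

definition pairs :: "nat \<Rightarrow> (nat \<Rightarrow> nat) \<Rightarrow> nat \<Rightarrow> nat \<Rightarrow> nat \<Rightarrow> pair set" where
  "pairs K g L T N = userSets K g L T \<times> chunks N"

definition feasible :: "nat \<Rightarrow> (nat \<Rightarrow> nat) \<Rightarrow> nat \<Rightarrow> nat \<Rightarrow> nat \<Rightarrow> (nat \<Rightarrow> pair \<Rightarrow> real)
    \<Rightarrow> 'q set \<Rightarrow> ('q \<Rightarrow> pair \<Rightarrow> nat) \<Rightarrow> pair set \<Rightarrow> bool" where
  "feasible K g L N J \<beta> I \<alpha> F \<longleftrightarrow>
     (\<forall>s\<in>{1..L}. card {x\<in>F. fst x \<inter> groupset K g s \<noteq> {}} \<le> 1) \<and>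
     (\<forall>n\<in>{1..N}. card {x\<in>F. n \<in> snd x} \<le> 1) \<and>
     (\<forall>q\<in>{1..J}. (\<Sum>x\<in>F. \<beta> q x) \<le> 1) \<and>
     (\<forall>q\<in>I. (\<Sum>x\<in>F. \<alpha> q x) \<le> 1)"

text \<open>Optimal value of (P1) restricted to pairs in A (Max over a finite family containing the empty set).\<close>
definition opt_value :: "pair set \<Rightarrow> (pair set \<Rightarrow> bool) \<Rightarrow> (pair \<Rightarrow> real) \<Rightarrow> real" where
  "opt_value A feas p = Max ((\<lambda>F. \<Sum>x\<in>F. p x) ` {F. F \<subseteq> A \<and> feas F})"

definition conflicts :: "nat \<Rightarrow> (nat \<Rightarrow> nat) \<Rightarrow> nat \<Rightarrow> 'q set \<Rightarrow> ('q \<Rightarrow> pair \<Rightarrow> nat)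
    \<Rightarrow> pair \<Rightarrow> pair \<Rightarrow> bool" where
  "conflicts K g L I \<alpha> x y \<longleftrightarrow>
     (\<exists>s\<in>{1..L}. fst x \<inter> groupset K g s \<noteq> {} \<and> fst y \<inter> groupset K g s \<noteq> {}) \<or>
     snd x \<inter> snd y \<noteq> {} \<or>
     (\<exists>q\<in>I. \<alpha> q x = 1 \<and> \<alpha> q y = 1)"

definition maxbeta :: "nat \<Rightarrow> (nat \<Rightarrow> pair \<Rightarrow> real) \<Rightarrow> pair \<Rightarrow> real" where
  "maxbeta J \<beta> x = (if J = 0 then 0 else Max ((\<lambda>q. \<beta> q x) ` {1..J}))"

definition narrow :: "nat \<Rightarrow> (nat \<Rightarrow> pair \<Rightarrow> real) \<Rightarrow> pair set \<Rightarrow> pair set" where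
  "narrow J \<beta> A = {x\<in>A. \<forall>q\<in>{1..J}. \<beta> q x \<le> 1/2}"

text \<open>Popping the stack (a list whose head is the top) into an initially empty S'.\<close>
definition greedy_pop :: "(pair set \<Rightarrow> bool) \<Rightarrow> pair list \<Rightarrow> pair set" where
  "greedy_pop feas xs = foldl (\<lambda>S' x. if feas (insert x S') then insert x S' else S') {} xs"

text \<open>A valid execution of the loop of Algorithm IIa (any tie-breaking of the maximizer):
  Pp j is p' after iteration j (only its values on Mn matter), St j the stack after iteration j
  (head = top).\<close>
definition algIIa_run :: "pair set \<Rightarrow> (pair \<Rightarrow> real) \<Rightarrow> (pair \<Rightarrow> pair \<Rightarrow> bool) \<Rightarrow> (pair \<Rightarrow> real)
    \<Rightarrow> nat \<Rightarrow> (nat \<Rightarrow> pair \<Rightarrow> real) \<Rightarrow> (nat \<Rightarrow> pair list) \<Rightarrow> bool" where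
  "algIIa_run Mn p conf mb N Pp St \<longleftrightarrow>
     (\<forall>x\<in>Mn. Pp 0 x = p x) \<and> St 0 = [] \<and>
     (\<forall>j\<in>{1..N}.
        let C = {x\<in>Mn. tail (snd x) = j} in
        (C = {} \<and> St j = St (j-1) \<and> (\<forall>x\<in>Mn. Pp j x = Pp (j-1) x)) \<or>
        (\<exists>xs\<in>C. (\<forall>x\<in>C. Pp (j-1) x \<le> Pp (j-1) xs) \<and>
           (let h = Pp (j-1) xs in
             (h \<le> 0 \<and> St j = St (j-1) \<and> (\<forall>x\<in>Mn. Pp j x = Pp (j-1) x)) \<or>
             (h > 0 \<and> St j = xs # St (j-1) \<and>
                (\<forall>x\<in>Mn. Pp j x = (if Pp (j-1) x > 0
                    then Pp (j-1) x - (if conf x xs then h else 2 * h * mb x)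
                    else Pp (j-1) x))))))"

end

theory Submission
  imports Defs
begin

(*
  The core is a local-ratio analysis of an arbitrary execution of Algorithm IIa.  Let
  h_j be the residual value of the pair pushed in iteration j (h_j = 0 if nothing is
  pushed) and H = h_1 + ... + h_N.  Two bounds on H are proved:
  (a) every feasible set F of narrow pairs loses at most (1 + T + Delta + 2J) h_j of
      residual value in iteration j (at most T + 1 + Delta of its still-active pairs
      conflict with the pushed pair, and the maxbeta-weights of F sum to at most J),
      and every pair of F is exhausted once its tail RB has been processed; hence
      p(F) <= (1 + T + Delta + 2J) H;
  (b) popping the stack greedily collects value at least H: a popped pair is either
      accepted, gaining h_j, or it is blocked by the pairs accepted before, which then
      lost at least h_j of residual value in iteration j.
*)

lemma tail_atLeastAtMost: "a \<le> b \<Longrightarrow> tail {a..b} = (b::nat)"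
  unfolding tail_def by (simp add: Max_eq_iff)

lemma tail_in_chunk: "c \<in> chunks N \<Longrightarrow> tail c \<in> c \<and> 1 \<le> tail c \<and> tail c \<le> N"
  unfolding chunks_def by (auto simp: tail_atLeastAtMost)

lemma le_tail: "c \<in> chunks N \<Longrightarrow> n \<in> c \<Longrightarrow> n \<le> tail c"
  unfolding chunks_def by (auto simp: tail_atLeastAtMost)

lemma chunk_convex: "c \<in> chunks N \<Longrightarrow> n \<in> c \<Longrightarrow> m \<in> c \<Longrightarrow> n \<le> k \<Longrightarrow> k \<le> m \<Longrightarrow> k \<in> c"
  unfolding chunks_def by auto

lemma finite_pairs: "finite (pairs K g L T N)"
proof -
  have "userSets K g L T \<subseteq> Pow {1..K}" unfolding userSets_def by auto
  moreover have "chunks N \<subseteq> Pow {1..N}" unfolding chunks_def by auto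
  ultimately show ?thesis unfolding pairs_def
    by (meson finite_Pow_iff finite_SigmaI finite_atLeastAtMost finite_subset)
qed

lemma feasible_empty: "feasible K g L N J \<beta> I \<alpha> {}"
  unfolding feasible_def by simp

lemma feasible_subset:
  assumes feas: "feasible K g L N J \<beta> I \<alpha> F" and sub: "G \<subseteq> F" and fin: "finite F"
    and beta_nonneg: "\<forall>x\<in>F. \<forall>q\<in>{1..J}. 0 \<le> \<beta> q x"
  shows "feasible K g L N J \<beta> I \<alpha> G"
proof -
  have card_le: "card {x\<in>G. P x} \<le> card {x\<in>F. P x}" for P
    using sub fin by (intro card_mono) auto
  have beta_le: "(\<Sum>x\<in>G. \<beta> q x) \<le> (\<Sum>x\<in>F. \<beta> q x)" if "q \<in> {1..J}" for q
    by (rule sum_mono2[OF fin sub]) (use beta_nonneg that in blast)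
  have alpha_le: "(\<Sum>x\<in>G. \<alpha> q x) \<le> (\<Sum>x\<in>F. \<alpha> q x)" for q
    by (rule sum_mono2[OF fin sub]) simp
  show ?thesis
    using feas card_le beta_le alpha_le unfolding feasible_def by (meson order_trans)
qed

lemma card_filter_insert_le_one:
  assumes "finite S" "card {y\<in>S. P y} \<le> 1" "P x \<Longrightarrow> \<forall>y\<in>S. \<not> P y"
  shows "card {y\<in>insert x S. P y} \<le> 1"
proof (cases "P x")
  case True
  then have "{y\<in>insert x S. P y} = {x}" using assms(3) by auto
  then show ?thesis by simp
next
  case False
  then have "{y\<in>insert x S. P y} = {y\<in>S. P y}" by auto
  then show ?thesis using assms(2) by simp
qed

text \<open>A pair conflicting with no member of a feasible set can be added to it, as long as the
  \<open>\<beta>\<close>-budgets are respected: the three kinds of conflict are exactly the three exclusive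
  resources (groups, RBs and the binary weights \<open>\<alpha>\<close>).\<close>
lemma feasible_insert:
  assumes fin: "finite S" and feas: "feasible K g L N J \<beta> I \<alpha> S" and new: "x \<notin> S"
    and no_conflict: "\<forall>y\<in>S. \<not> conflicts K g L I \<alpha> y x"
    and binary: "\<forall>y\<in>insert x S. \<forall>q\<in>I. \<alpha> q y \<in> {0, 1}"
    and budget: "\<forall>q\<in>{1..J}. (\<Sum>y\<in>insert x S. \<beta> q y) \<le> 1"
  shows "feasible K g L N J \<beta> I \<alpha> (insert x S)"
proof -
  have groups: "card {y\<in>insert x S. fst y \<inter> groupset K g s \<noteq> {}} \<le> 1" if s: "s \<in> {1..L}" for s
  proof (rule card_filter_insert_le_one[OF fin])
    show "card {y\<in>S. fst y \<inter> groupset K g s \<noteq> {}} \<le> 1"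
      using feas s unfolding feasible_def by blast
    show "fst x \<inter> groupset K g s \<noteq> {} \<Longrightarrow> \<forall>y\<in>S. \<not> fst y \<inter> groupset K g s \<noteq> {}"
      using no_conflict s unfolding conflicts_def by blast
  qed
  have rbs: "card {y\<in>insert x S. n \<in> snd y} \<le> 1" if n: "n \<in> {1..N}" for n
  proof (rule card_filter_insert_le_one[OF fin])
    show "card {y\<in>S. n \<in> snd y} \<le> 1" using feas n unfolding feasible_def by blast
    show "n \<in> snd x \<Longrightarrow> \<forall>y\<in>S. n \<notin> snd y" using no_conflict unfolding conflicts_def by blast
  qed
  have alphas: "(\<Sum>y\<in>insert x S. \<alpha> q y) \<le> 1" if q: "q \<in> I" for q
  proof (cases "\<alpha> q x = 1")
    case True
    then have "\<forall>y\<in>S. \<alpha> q y = 0"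
      using no_conflict binary q unfolding conflicts_def by fastforce
    then show ?thesis using fin new True by simp
  next
    case False
    then have "\<alpha> q x = 0" using binary q by auto
    then show ?thesis using fin new feas q unfolding feasible_def by simp
  qed
  show ?thesis using groups rbs alphas budget unfolding feasible_def by blast
qed

lemma opt_value_attained:
  assumes "finite A" "feas {}"
  obtains F where "F \<subseteq> A" "feas F" "opt_value A feas p = (\<Sum>x\<in>F. p x)"
proof -
  have "opt_value A feas p \<in> (\<lambda>F. \<Sum>x\<in>F. p x) ` {F. F \<subseteq> A \<and> feas F}"
    unfolding opt_value_def using assms by (intro Max_in) auto
  then show ?thesis using that by blast
qed

lemma opt_value_ge:
  assumes "finite A" "F \<subseteq> A" "feas F"
  shows "(\<Sum>x\<in>F. p x) \<le> opt_value A feas p"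
  unfolding opt_value_def using assms by (intro Max_ge) auto

lemma maxbeta_ge:
  assumes "q \<in> {1..J}"
  shows "\<beta> q x \<le> maxbeta J \<beta> x"
proof -
  have "\<beta> q x \<le> Max ((\<lambda>q. \<beta> q x) ` {1..J})" using assms by (intro Max_ge) auto
  then show ?thesis using assms unfolding maxbeta_def by simp
qed

lemma maxbeta_nonneg:
  assumes "\<forall>q\<in>{1..J}. 0 \<le> \<beta> q x"
  shows "0 \<le> maxbeta J \<beta> x"
proof (cases "J = 0")
  case False
  then have "0 \<le> \<beta> 1 x" using assms by simp
  also have "\<dots> \<le> maxbeta J \<beta> x" using False by (intro maxbeta_ge) simp
  finally show ?thesis .
qed (simp add: maxbeta_def)

lemma maxbeta_le_sum:
  assumes "\<forall>q\<in>{1..J}. 0 \<le> \<beta> q x"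
  shows "maxbeta J \<beta> x \<le> (\<Sum>q\<in>{1..J}. \<beta> q x)"
proof (cases "J = 0")
  case False
  have "Max ((\<lambda>q. \<beta> q x) ` {1..J}) \<in> (\<lambda>q. \<beta> q x) ` {1..J}"
    using False by (intro Max_in) auto
  then obtain q where "q \<in> {1..J}" "Max ((\<lambda>q. \<beta> q x) ` {1..J}) = \<beta> q x" by blast
  then have q: "q \<in> {1..J}" "maxbeta J \<beta> x = \<beta> q x"
    using False unfolding maxbeta_def by auto
  have "\<beta> q x \<le> (\<Sum>q\<in>{1..J}. \<beta> q x)"
    by (rule member_le_sum) (use q assms in auto)
  then show ?thesis using q by simp
qed (simp add: maxbeta_def)

text \<open>The \<open>maxbeta\<close>-weights of a feasible set sum to at most \<open>J\<close>, one unit per budget.\<close>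
lemma sum_maxbeta_feasible:
  assumes "finite F" "feasible K g L N J \<beta> I \<alpha> F" "\<forall>x\<in>F. \<forall>q\<in>{1..J}. 0 \<le> \<beta> q x"
  shows "(\<Sum>x\<in>F. maxbeta J \<beta> x) \<le> real J"
proof -
  have "(\<Sum>x\<in>F. maxbeta J \<beta> x) \<le> (\<Sum>x\<in>F. \<Sum>q\<in>{1..J}. \<beta> q x)"
    using assms(3) by (intro sum_mono maxbeta_le_sum) auto
  also have "\<dots> = (\<Sum>q\<in>{1..J}. \<Sum>x\<in>F. \<beta> q x)" by (rule sum.swap)
  also have "\<dots> \<le> (\<Sum>q\<in>{1..J}. 1)"
    using assms(2) by (intro sum_mono) (auto simp: feasible_def)
  finally show ?thesis by simp
qed

section \<open>Counting conflicts\<close>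

text \<open>A feasible set meets each group of \<open>fst x\<close> at most once, and \<open>fst x\<close> meets at most
  \<open>T\<close> groups, so at most \<open>T\<close> of its pairs share a group with \<open>x\<close>.\<close>
lemma card_group_conflicts:
  assumes x: "x \<in> pairs K g L T N" and fin: "finite F" and feas: "feasible K g L N J \<beta> I \<alpha> F"
  shows "card {y\<in>F. \<exists>s\<in>{1..L}. fst y \<inter> groupset K g s \<noteq> {} \<and> fst x \<inter> groupset K g s \<noteq> {}}
           \<le> T"
proof -
  define Sx where "Sx = {s\<in>{1..L}. fst x \<inter> groupset K g s \<noteq> {}}"
  have "fst x \<subseteq> {1..K}" "card (fst x) \<le> T" using x unfolding pairs_def userSets_def by auto
  then have finx: "finite (fst x)" "card (fst x) \<le> T" by (auto intro: finite_subset)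
  have "{y\<in>F. \<exists>s\<in>{1..L}. fst y \<inter> groupset K g s \<noteq> {} \<and> fst x \<inter> groupset K g s \<noteq> {}}
          = (\<Union>s\<in>Sx. {y\<in>F. fst y \<inter> groupset K g s \<noteq> {}})"
    unfolding Sx_def by auto
  also have "card \<dots> \<le> (\<Sum>s\<in>Sx. card {y\<in>F. fst y \<inter> groupset K g s \<noteq> {}})"
    by (rule card_UN_le) (simp add: Sx_def)
  also have "\<dots> \<le> (\<Sum>s\<in>Sx. 1)"
    using feas by (intro sum_mono) (auto simp: feasible_def Sx_def)
  also have "\<dots> = card Sx" by simp
  also have "\<dots> \<le> card (g ` fst x)"
    using finx by (intro card_mono) (auto simp: Sx_def groupset_def)
  also have "\<dots> \<le> T" using finx card_image_le order_trans by blast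
  finally show ?thesis .
qed

text \<open>A pair ending no earlier than \<open>x\<close> and overlapping its chunk contains the tail of \<open>x\<close>;
  a feasible set has at most one such pair.\<close>
lemma card_rb_conflicts:
  assumes x: "x \<in> pairs K g L T N" and F: "F \<subseteq> pairs K g L T N"
    and fin: "finite F" and feas: "feasible K g L N J \<beta> I \<alpha> F"
  shows "card {y\<in>F. tail (snd x) \<le> tail (snd y) \<and> snd y \<inter> snd x \<noteq> {}} \<le> 1"
proof -
  let ?j = "tail (snd x)"
  have "?j \<in> snd y" if y: "y \<in> F" "?j \<le> tail (snd y)" "snd y \<inter> snd x \<noteq> {}" for y
  proof -
    have cx: "snd x \<in> chunks N" and cy: "snd y \<in> chunks N" using x y F unfolding pairs_def by auto
    obtain n where n: "n \<in> snd x" "n \<in> snd y" using y(3) by blast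
    show ?thesis
    proof (rule chunk_convex[OF cy n(2)])
      show "tail (snd y) \<in> snd y" using tail_in_chunk[OF cy] by blast
      show "n \<le> ?j" using le_tail[OF cx n(1)] .
      show "?j \<le> tail (snd y)" using y(2) .
    qed
  qed
  then have "card {y\<in>F. ?j \<le> tail (snd y) \<and> snd y \<inter> snd x \<noteq> {}} \<le> card {y\<in>F. ?j \<in> snd y}"
    using fin by (intro card_mono) auto
  also have "\<dots> \<le> 1"
  proof -
    have "snd x \<in> chunks N" using x unfolding pairs_def by auto
    then have "?j \<in> {1..N}" using tail_in_chunk[of "snd x" N] by auto
    then show ?thesis using feas unfolding feasible_def by blast
  qed
  finally show ?thesis .
qed

text \<open>Each binary weight set to 1 at \<open>x\<close> is set to 1 at most once in a feasible set, and at
  most \<open>\<Delta>\<close> of them are set at \<open>x\<close>.\<close>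
lemma card_alpha_conflicts:
  assumes fin: "finite F" and feas: "feasible K g L N J \<beta> I \<alpha> F" and finI: "finite I"
    and alpha_sum: "(\<Sum>q\<in>I. \<alpha> q x) \<le> \<Delta>"
  shows "card {y\<in>F. \<exists>q\<in>I. \<alpha> q y = 1 \<and> \<alpha> q x = 1} \<le> \<Delta>"
proof -
  define Q where "Q = {q\<in>I. \<alpha> q x = 1}"
  have once: "card {y\<in>F. \<alpha> q y = 1} \<le> 1" if "q \<in> I" for q
  proof -
    have "card {y\<in>F. \<alpha> q y = 1} = (\<Sum>y\<in>{y\<in>F. \<alpha> q y = 1}. \<alpha> q y)" by simp
    also have "\<dots> \<le> (\<Sum>y\<in>F. \<alpha> q y)" using fin by (intro sum_mono2) auto
    also have "\<dots> \<le> 1" using feas that unfolding feasible_def by auto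
    finally show ?thesis .
  qed
  have "{y\<in>F. \<exists>q\<in>I. \<alpha> q y = 1 \<and> \<alpha> q x = 1} = (\<Union>q\<in>Q. {y\<in>F. \<alpha> q y = 1})"
    unfolding Q_def by auto
  also have "card \<dots> \<le> (\<Sum>q\<in>Q. card {y\<in>F. \<alpha> q y = 1})"
    using finI by (intro card_UN_le) (simp add: Q_def)
  also have "\<dots> \<le> (\<Sum>q\<in>Q. \<alpha> q x)"
    using once by (intro sum_mono) (simp add: Q_def)
  also have "\<dots> \<le> (\<Sum>q\<in>I. \<alpha> q x)" using finI by (intro sum_mono2) (auto simp: Q_def)
  finally show ?thesis using alpha_sum by linarith
qed

lemma card_conflicts_ending_later:
  assumes x: "x \<in> pairs K g L T N" and F: "F \<subseteq> pairs K g L T N"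
    and feas: "feasible K g L N J \<beta> I \<alpha> F" and finI: "finite I"
    and alpha_sum: "(\<Sum>q\<in>I. \<alpha> q x) \<le> \<Delta>"
  shows "card {y\<in>F. tail (snd x) \<le> tail (snd y) \<and> conflicts K g L I \<alpha> y x} \<le> T + 1 + \<Delta>"
proof -
  have fin: "finite F" using F finite_pairs by (rule finite_subset)
  let ?A = "{y\<in>F. \<exists>s\<in>{1..L}. fst y \<inter> groupset K g s \<noteq> {} \<and> fst x \<inter> groupset K g s \<noteq> {}}"
  let ?B = "{y\<in>F. tail (snd x) \<le> tail (snd y) \<and> snd y \<inter> snd x \<noteq> {}}"
  let ?C = "{y\<in>F. \<exists>q\<in>I. \<alpha> q y = 1 \<and> \<alpha> q x = 1}"
  have "card {y\<in>F. tail (snd x) \<le> tail (snd y) \<and> conflicts K g L I \<alpha> y x} \<le> card (?A \<union> ?B \<union> ?C)"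
    using fin by (intro card_mono) (auto simp: conflicts_def)
  also have "\<dots> \<le> card (?A \<union> ?B) + card ?C" by (rule card_Un_le)
  also have "\<dots> \<le> card ?A + card ?B + card ?C" using card_Un_le[of ?A ?B] by linarith
  also have "\<dots> \<le> T + 1 + \<Delta>"
    using card_group_conflicts[OF x fin feas] card_rb_conflicts[OF x F fin feas]
      card_alpha_conflicts[OF fin feas finI alpha_sum] by linarith
  finally show ?thesis .
qed

section \<open>An execution of Algorithm IIa\<close>

locale algIIa_execution =
  fixes K L N T J \<Delta> :: nat
    and g :: "nat \<Rightarrow> nat"
    and p :: "pair \<Rightarrow> real"
    and \<beta> :: "nat \<Rightarrow> pair \<Rightarrow> real"
    and I :: "'q set"
    and \<alpha> :: "'q \<Rightarrow> pair \<Rightarrow> nat"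
    and Pp :: "nat \<Rightarrow> pair \<Rightarrow> real"
    and St :: "nat \<Rightarrow> pair list"
  assumes finI: "finite I"
    and beta_nonneg: "x \<in> pairs K g L T N \<Longrightarrow> \<forall>q\<in>{1..J}. 0 \<le> \<beta> q x"
    and alpha_bin: "\<forall>x\<in>pairs K g L T N. \<forall>q\<in>I. \<alpha> q x \<in> {0, 1}"
    and alpha_sum: "\<forall>x\<in>pairs K g L T N. (\<Sum>q\<in>I. \<alpha> q x) \<le> \<Delta>"
    and run: "algIIa_run (narrow J \<beta> (pairs K g L T N)) p (conflicts K g L I \<alpha>)
                (maxbeta J \<beta>) N Pp St"
begin

abbreviation "M \<equiv> pairs K g L T N"
abbreviation "Mn \<equiv> narrow J \<beta> M"
abbreviation "feas \<equiv> feasible K g L N J \<beta> I \<alpha>"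
abbreviation "conf \<equiv> conflicts K g L I \<alpha>"
abbreviation "mb \<equiv> maxbeta J \<beta>"

abbreviation "ratio \<equiv> 1 + real T + real \<Delta> + 2 * real J"

lemma narrow_sub: "Mn \<subseteq> M"
  unfolding narrow_def by auto

lemma finite_sub_narrow: "S \<subseteq> Mn \<Longrightarrow> finite S"
  using finite_subset[OF _ finite_pairs] narrow_sub by blast

lemma mb_nonneg: "x \<in> M \<Longrightarrow> 0 \<le> mb x"
  by (intro maxbeta_nonneg beta_nonneg)

lemma feas_subset:
  assumes "feas F" "G \<subseteq> F" "F \<subseteq> M"
  shows "feas G"
proof (rule feasible_subset[OF assms(1,2)])
  show "finite F" using assms(3) finite_pairs by (rule finite_subset)
  show "\<forall>x\<in>F. \<forall>q\<in>{1..J}. 0 \<le> \<beta> q x" using assms(3) beta_nonneg by blast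
qed

lemma tail_range: "x \<in> M \<Longrightarrow> tail (snd x) \<in> snd x \<and> 1 \<le> tail (snd x) \<and> tail (snd x) \<le> N"
  using tail_in_chunk[of "snd x" N] unfolding pairs_def by auto

lemma initial_residual: "y \<in> Mn \<Longrightarrow> Pp 0 y = p y"
  and initial_stack: "St 0 = []"
  using run unfolding algIIa_run_def by auto

definition pushes :: "nat \<Rightarrow> pair \<Rightarrow> bool" where
  "pushes j x \<longleftrightarrow> x \<in> Mn \<and> tail (snd x) = j \<and> Pp (j-1) x > 0 \<and>
     (\<forall>y\<in>Mn. tail (snd y) = j \<longrightarrow> Pp (j-1) y \<le> Pp (j-1) x) \<and> St j = x # St (j-1) \<and>
     (\<forall>y\<in>Mn. Pp j y = (if Pp (j-1) y > 0
                    then Pp (j-1) y - (if conf y x then Pp (j-1) x else 2 * Pp (j-1) x * mb y)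
                    else Pp (j-1) y))"

definition idles :: "nat \<Rightarrow> bool" where
  "idles j \<longleftrightarrow> St j = St (j-1) \<and> (\<forall>y\<in>Mn. Pp j y = Pp (j-1) y) \<and>
     (\<forall>y\<in>Mn. tail (snd y) = j \<longrightarrow> Pp (j-1) y \<le> 0)"

lemma step_cases:
  assumes "j \<in> {1..N}"
  obtains "idles j" | x where "pushes j x"
proof -
  let ?C = "{x\<in>Mn. tail (snd x) = j}"
  from run assms consider "?C = {} \<and> St j = St (j-1) \<and> (\<forall>x\<in>Mn. Pp j x = Pp (j-1) x)"
    | x where "x \<in> ?C" "\<forall>y\<in>?C. Pp (j-1) y \<le> Pp (j-1) x"
        "Pp (j-1) x \<le> 0 \<and> St j = St (j-1) \<and> (\<forall>y\<in>Mn. Pp j y = Pp (j-1) y)"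
    | x where "x \<in> ?C" "\<forall>y\<in>?C. Pp (j-1) y \<le> Pp (j-1) x" "Pp (j-1) x > 0" "St j = x # St (j-1)"
        "\<forall>y\<in>Mn. Pp j y = (if Pp (j-1) y > 0
           then Pp (j-1) y - (if conf y x then Pp (j-1) x else 2 * Pp (j-1) x * mb y)
           else Pp (j-1) y)"
    unfolding algIIa_run_def Let_def by blast
  then show ?thesis
  proof cases
    case 1
    then show ?thesis using that(1) unfolding idles_def by blast
  next
    case (2 x)
    then have "idles j" unfolding idles_def by force
    then show ?thesis by (rule that(1))
  next
    case (3 x)
    then have "pushes j x" unfolding pushes_def by auto
    then show ?thesis by (rule that(2))
  qed
qed

definition gain :: "nat \<Rightarrow> real" where
  "gain j = (if \<exists>x. pushes j x then Pp (j-1) (SOME x. pushes j x) else 0)"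

lemma idles_stack: "idles j \<Longrightarrow> St j = St (j-1)"
  unfolding idles_def by blast

lemma idles_residual: "idles j \<Longrightarrow> y \<in> Mn \<Longrightarrow> Pp j y = Pp (j-1) y"
  unfolding idles_def by blast

lemma idles_exhausted: "idles j \<Longrightarrow> y \<in> Mn \<Longrightarrow> tail (snd y) = j \<Longrightarrow> Pp (j-1) y \<le> 0"
  unfolding idles_def by blast

lemma pushes_pair: "pushes j x \<Longrightarrow> x \<in> Mn \<and> tail (snd x) = j \<and> 0 < Pp (j-1) x"
  unfolding pushes_def by blast

lemma pushes_max: "pushes j x \<Longrightarrow> y \<in> Mn \<Longrightarrow> tail (snd y) = j \<Longrightarrow> Pp (j-1) y \<le> Pp (j-1) x"
  unfolding pushes_def by blast

text \<open>The pushed pair is the new top of the stack; hence it is unique, and no pair is pushed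
  in an idle iteration.\<close>
lemma stack_pushes: "pushes j x \<Longrightarrow> St j = x # St (j-1)"
  unfolding pushes_def by blast

lemma gain_pushes:
  assumes x: "pushes j x"
  shows "gain j = Pp (j-1) x"
proof -
  have "pushes j (SOME x. pushes j x)" using x by (rule someI)
  then have some: "(SOME x. pushes j x) = x" using stack_pushes[of j] x by (metis list.inject)
  have "\<exists>x. pushes j x" using x by blast
  then show ?thesis unfolding gain_def some by simp
qed

lemma gain_idles:
  assumes "idles j"
  shows "gain j = 0"
proof -
  have "\<not> pushes j x" for x
    using stack_pushes[of j x] idles_stack[OF assms] by auto
  then show ?thesis unfolding gain_def by auto
qed

lemma loss_pushes:
  "pushes j x \<Longrightarrow> y \<in> Mn \<Longrightarrow> Pp (j-1) y - Pp j y =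
     (if Pp (j-1) y > 0 then (if conf y x then Pp (j-1) x else 2 * Pp (j-1) x * mb y) else 0)"
  unfolding pushes_def by auto

text \<open>Residual values never increase, stay put once nonpositive, and a pair is exhausted in
  the iteration of its tail RB (there it conflicts with the pushed pair, whose residual
  value is at least its own).\<close>
lemma residual_step:
  assumes j: "j \<in> {1..N}" and y: "y \<in> Mn"
  shows "Pp j y \<le> Pp (j-1) y" and "Pp (j-1) y \<le> 0 \<Longrightarrow> Pp j y = Pp (j-1) y"
    and "tail (snd y) = j \<Longrightarrow> Pp j y \<le> 0"
proof -
  have "Pp j y \<le> Pp (j-1) y \<and> (Pp (j-1) y \<le> 0 \<longrightarrow> Pp j y = Pp (j-1) y) \<and>
        (tail (snd y) = j \<longrightarrow> Pp j y \<le> 0)"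
  proof (cases rule: step_cases[OF j])
    case 1
    then show ?thesis using idles_residual[OF 1 y] idles_exhausted[OF 1 y] by simp
  next
    case (2 x)
    have x: "0 < Pp (j-1) x" "tail (snd x) = j" "x \<in> M"
      using pushes_pair[OF 2] narrow_sub by auto
    have yM: "y \<in> M" using y narrow_sub by blast
    have loss: "Pp (j-1) y - Pp j y =
      (if Pp (j-1) y > 0 then (if conf y x then Pp (j-1) x else 2 * Pp (j-1) x * mb y) else 0)"
      using loss_pushes[OF 2 y] .
    have "0 \<le> Pp (j-1) y - Pp j y" using loss x(1) mb_nonneg[OF yM] by simp
    moreover have "Pp (j-1) y \<le> 0 \<Longrightarrow> Pp j y = Pp (j-1) y" using loss by simp
    moreover have "Pp j y \<le> 0" if tail: "tail (snd y) = j"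
    proof -
      have "j \<in> snd y" "j \<in> snd x" using tail_range[OF yM] tail_range[OF x(3)] tail x(2) by auto
      then have "conf y x" unfolding conflicts_def by blast
      moreover have "Pp (j-1) y \<le> Pp (j-1) x" using pushes_max[OF 2 y tail] .
      ultimately show ?thesis using loss by (cases "0 < Pp (j-1) y") simp_all
    qed
    ultimately show ?thesis by auto
  qed
  then show "Pp j y \<le> Pp (j-1) y" "Pp (j-1) y \<le> 0 \<Longrightarrow> Pp j y = Pp (j-1) y"
    "tail (snd y) = j \<Longrightarrow> Pp j y \<le> 0" by auto
qed

lemma residual_exhausted:
  assumes y: "y \<in> Mn"
  shows "tail (snd y) \<le> j \<Longrightarrow> j \<le> N \<Longrightarrow> Pp j y \<le> 0"
proof (induction j)
  case 0
  then show ?case using tail_range y narrow_sub by fastforce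
next
  case (Suc j)
  then have j: "Suc j \<in> {1..N}" by auto
  show ?case
  proof (cases "tail (snd y) = Suc j")
    case True
    then show ?thesis using residual_step(3)[OF j y] by simp
  next
    case False
    then show ?thesis using Suc residual_step(2)[OF j y] by simp
  qed
qed

section \<open>Upper bound: the narrow optimum is at most \<open>ratio\<close> times the total gain\<close>

text \<open>A feasible set of narrow pairs loses at most \<open>ratio \<cdot> h\<^sub>j\<close> of residual value in
  iteration \<open>j\<close>: a conflicting active pair loses \<open>h\<^sub>j\<close> (and there are at most \<open>T + 1 + \<Delta>\<close>
  of them, all ending no earlier than \<open>j\<close>), any other pair \<open>y\<close> loses \<open>2 h\<^sub>j maxbeta(y)\<close>.\<close>
lemma step_loss_le:
  assumes j: "j \<in> {1..N}" and F: "F \<subseteq> Mn" and feasF: "feas F"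
  shows "(\<Sum>y\<in>F. Pp (j-1) y - Pp j y) \<le> ratio * gain j"
proof (cases rule: step_cases[OF j])
  case 1
  then have "\<forall>y\<in>F. Pp (j-1) y - Pp j y = 0" using F idles_residual by auto
  then show ?thesis using gain_idles[OF 1] by simp
next
  case (2 x)
  let ?h = "Pp (j-1) x"
  let ?C = "{y\<in>F. tail (snd x) \<le> tail (snd y) \<and> conf y x}"
  have x: "?h > 0" "x \<in> M" "tail (snd x) = j" using pushes_pair[OF 2] narrow_sub by auto
  have fin: "finite F" using F by (rule finite_sub_narrow)
  have FM: "F \<subseteq> M" using F narrow_sub by auto
  have loss: "Pp (j-1) y - Pp j y \<le> ?h * of_bool (y \<in> ?C) + 2 * ?h * mb y" if y: "y \<in> F" for y
  proof -
    have yMn: "y \<in> Mn" using y F by blast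
    have "0 \<le> mb y" using y FM mb_nonneg by blast
    then have mb: "0 \<le> 2 * ?h * mb y" using x(1) by simp
    show ?thesis
    proof (cases "0 < Pp (j-1) y")
      case True
      have "j \<le> tail (snd y)"
      proof (rule ccontr)
        assume "\<not> j \<le> tail (snd y)"
        then have "Pp (j-1) y \<le> 0" using residual_exhausted[OF yMn, of "j-1"] j by auto
        then show False using True by simp
      qed
      then show ?thesis
        using loss_pushes[OF 2 yMn] True mb x(1,3) y by (cases "conf y x") simp_all
    next
      case False
      then show ?thesis using loss_pushes[OF 2 yMn] mb x(1) by simp
    qed
  qed
  have count: "(\<Sum>y\<in>F. of_bool (y \<in> ?C)) = real (card ?C)"
  proof -
    have "F \<inter> {y. tail (snd x) \<le> tail (snd y) \<and> conf y x} = ?C" by blast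
    then show ?thesis using fin by (simp add: sum_of_bool_eq)
  qed
  have conflicts: "real (card ?C) \<le> real T + 1 + real \<Delta>"
    using card_conflicts_ending_later[OF x(2) FM feasF finI] alpha_sum x(2) by fastforce
  have weights: "(\<Sum>y\<in>F. mb y) \<le> real J"
    using sum_maxbeta_feasible[OF fin feasF] FM beta_nonneg by blast
  have "(\<Sum>y\<in>F. Pp (j-1) y - Pp j y) \<le> (\<Sum>y\<in>F. ?h * of_bool (y \<in> ?C) + 2 * ?h * mb y)"
    using loss by (rule sum_mono)
  also have "\<dots> = ?h * real (card ?C) + 2 * ?h * (\<Sum>y\<in>F. mb y)"
    by (simp add: sum.distrib flip: sum_distrib_left count)
  also have "\<dots> \<le> ?h * (real T + 1 + real \<Delta>) + 2 * ?h * real J"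
    using conflicts weights x(1) by (intro add_mono mult_left_mono) auto
  also have "\<dots> = ratio * gain j" using gain_pushes[OF 2] by (simp add: algebra_simps)
  finally show ?thesis .
qed

lemma telescope: "(f::nat \<Rightarrow> real) 0 - f n = (\<Sum>k\<in>{1..n}. f (k-1) - f k)"
  by (induction n) auto

text \<open>Summing the losses over all iterations: every pair of \<open>F\<close> starts with its value \<open>p\<close>
  and ends exhausted.\<close>
lemma narrow_feasible_le_gain:
  assumes F: "F \<subseteq> Mn" and feasF: "feas F"
  shows "(\<Sum>x\<in>F. p x) \<le> ratio * (\<Sum>k\<in>{1..N}. gain k)"
proof -
  have "(\<Sum>x\<in>F. p x) = (\<Sum>x\<in>F. Pp 0 x)"
    using initial_residual F by (intro sum.cong) auto
  also have "\<dots> \<le> (\<Sum>x\<in>F. Pp 0 x - Pp N x)"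
  proof (rule sum_mono)
    fix y assume "y \<in> F"
    then have y: "y \<in> Mn" using F by blast
    then have "tail (snd y) \<le> N" using tail_range narrow_sub by blast
    then have "Pp N y \<le> 0" using residual_exhausted[OF y] by blast
    then show "Pp 0 y \<le> Pp 0 y - Pp N y" by simp
  qed
  also have "\<dots> = (\<Sum>x\<in>F. \<Sum>k\<in>{1..N}. Pp (k-1) x - Pp k x)"
    by (intro sum.cong refl) (rule telescope)
  also have "\<dots> = (\<Sum>k\<in>{1..N}. \<Sum>x\<in>F. Pp (k-1) x - Pp k x)"
    by (rule sum.swap)
  also have "\<dots> \<le> (\<Sum>k\<in>{1..N}. ratio * gain k)"
    using step_loss_le F feasF by (intro sum_mono) auto
  finally show ?thesis by (simp add: sum_distrib_left)
qed

section \<open>Lower bound: popping the stack collects the total gain\<close>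

abbreviation "pop_step \<equiv> (\<lambda>S x. if feas (insert x S) then insert x S else S)"

text \<open>A pushed pair that cannot be added to a feasible set \<open>S\<close> of active pairs is blocked:
  either it conflicts with some pair of \<open>S\<close>, which then lost \<open>h\<^sub>j\<close>, or it exceeds a
  \<open>\<beta>\<close>-budget; being narrow, it then leaves more than 1/2 of that budget to \<open>S\<close>, whose
  losses \<open>2 h\<^sub>j maxbeta\<close> sum to more than \<open>h\<^sub>j\<close>.\<close>
lemma blocked_loss_ge:
  assumes push: "pushes j x" and S: "S \<subseteq> Mn" and feasS: "feas S" and new: "x \<notin> S"
    and blocked: "\<not> feas (insert x S)" and active: "\<forall>y\<in>S. Pp (j-1) y > 0"
  shows "Pp (j-1) x \<le> (\<Sum>y\<in>S. Pp (j-1) y - Pp j y)"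
proof -
  let ?h = "Pp (j-1) x"
  have fin: "finite S" using S by (rule finite_sub_narrow)
  have x: "?h > 0" "x \<in> Mn" using pushes_pair[OF push] by auto
  have loss: "Pp (j-1) y - Pp j y = (if conf y x then ?h else 2 * ?h * mb y)" if y: "y \<in> S" for y
  proof -
    have "y \<in> Mn" "0 < Pp (j-1) y" using y S active by auto
    then show ?thesis by (simp only: loss_pushes[OF push] if_True)
  qed
  have loss_nonneg: "0 \<le> Pp (j-1) y - Pp j y" if y: "y \<in> S" for y
  proof -
    have "0 \<le> mb y" using y S narrow_sub mb_nonneg by blast
    then show ?thesis using loss[OF y] x(1) by (cases "conf y x") simp_all
  qed
  show ?thesis
  proof (cases "\<exists>y\<in>S. conf y x")
    case True
    then obtain y where y: "y \<in> S" "conf y x" by blast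
    have "Pp (j-1) y - Pp j y \<le> (\<Sum>y\<in>S. Pp (j-1) y - Pp j y)"
      using fin y loss_nonneg by (intro member_le_sum) auto
    then show ?thesis using loss y by simp
  next
    case False
    have "insert x S \<subseteq> M" using S x(2) narrow_sub by auto
    then have binary: "\<forall>y\<in>insert x S. \<forall>q\<in>I. \<alpha> q y \<in> {0, 1}"
      using alpha_bin by (meson subsetD)
    have "\<not> (\<forall>q\<in>{1..J}. (\<Sum>y\<in>insert x S. \<beta> q y) \<le> 1)"
      using feasible_insert[OF fin feasS new _ binary] False blocked by blast
    then obtain q where q: "q \<in> {1..J}" "1 < (\<Sum>y\<in>insert x S. \<beta> q y)"
      by (auto simp: not_le)
    have "\<beta> q x \<le> 1/2" using x(2) q(1) unfolding narrow_def by blast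
    moreover have "(\<Sum>y\<in>insert x S. \<beta> q y) = \<beta> q x + (\<Sum>y\<in>S. \<beta> q y)"
      using fin new by simp
    ultimately have half: "1 \<le> 2 * (\<Sum>y\<in>S. \<beta> q y)" using q(2) by linarith
    have "?h \<le> ?h * (2 * (\<Sum>y\<in>S. \<beta> q y))" using mult_left_mono[OF half, of ?h] x(1) by simp
    also have "\<dots> = (\<Sum>y\<in>S. 2 * ?h * \<beta> q y)" by (simp add: sum_distrib_left algebra_simps)
    also have "\<dots> \<le> (\<Sum>y\<in>S. 2 * ?h * mb y)"
      using x q maxbeta_ge by (intro sum_mono) auto
    also have "\<dots> = (\<Sum>y\<in>S. Pp (j-1) y - Pp j y)" using loss False by simp
    finally show ?thesis .
  qed
qed

text \<open>Invariant of the popping phase just before the pairs pushed in iterations \<open>1..j\<close> are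
  popped: the accepted set \<open>S\<close> is feasible and consists of narrow pairs that are still active
  after iteration \<open>j\<close> and end after RB \<open>j\<close>.\<close>
definition admissible :: "nat \<Rightarrow> pair set \<Rightarrow> bool" where
  "admissible j S \<longleftrightarrow> S \<subseteq> Mn \<and> feas S \<and> (\<forall>y\<in>S. 0 < Pp j y \<and> j < tail (snd y))"

lemma admissible_idle:
  assumes j: "j \<in> {1..N}" and idle: "idles j" and S: "admissible j S"
  shows "admissible (j-1) S" and "(\<Sum>y\<in>S. Pp j y) + gain j = (\<Sum>y\<in>S. Pp (j-1) y)"
proof -
  have same: "Pp j y = Pp (j-1) y" if "y \<in> S" for y
  proof -
    have "y \<in> Mn" using S that unfolding admissible_def by blast
    then show ?thesis by (rule idles_residual[OF idle])
  qed
  then show "admissible (j-1) S" using S unfolding admissible_def by auto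
  show "(\<Sum>y\<in>S. Pp j y) + gain j = (\<Sum>y\<in>S. Pp (j-1) y)"
    using same gain_idles[OF idle] by simp
qed

lemma admissible_pop:
  assumes j: "j \<in> {1..N}" and push: "pushes j x" and S: "admissible j S"
  shows "admissible (j-1) (pop_step S x)"
    and "(\<Sum>y\<in>S. Pp j y) + gain j \<le> (\<Sum>y\<in>pop_step S x. Pp (j-1) y)"
proof -
  have x: "x \<in> Mn" "tail (snd x) = j" "0 < Pp (j-1) x" using pushes_pair[OF push] by auto
  have SMn: "S \<subseteq> Mn" and feasS: "feas S" and fin: "finite S"
    using S finite_sub_narrow unfolding admissible_def by auto
  have new: "x \<notin> S" using S x unfolding admissible_def by fastforce
  have mono: "Pp j y \<le> Pp (j-1) y" if "y \<in> S" for y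
    using residual_step(1)[OF j, of y] SMn that by blast
  have S': "admissible (j-1) S" using S mono unfolding admissible_def by fastforce
  have gain: "gain j = Pp (j-1) x" by (rule gain_pushes[OF push])
  show "admissible (j-1) (pop_step S x)"
    using S' x j unfolding admissible_def by auto
  show "(\<Sum>y\<in>S. Pp j y) + gain j \<le> (\<Sum>y\<in>pop_step S x. Pp (j-1) y)"
  proof (cases "feas (insert x S)")
    case True
    have "(\<Sum>y\<in>S. Pp j y) \<le> (\<Sum>y\<in>S. Pp (j-1) y)" using mono by (rule sum_mono)
    then show ?thesis using True fin new gain by simp
  next
    case False
    have "Pp (j-1) x \<le> (\<Sum>y\<in>S. Pp (j-1) y - Pp j y)"
      using blocked_loss_ge[OF push SMn feasS new False] S' unfolding admissible_def by auto
    then show ?thesis using False gain by (simp add: sum_subtractf)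
  qed
qed

lemma popping_collects_gain:
  "j \<le> N \<Longrightarrow> admissible j S \<Longrightarrow>
     (\<Sum>y\<in>S. Pp j y) + (\<Sum>k\<in>{1..j}. gain k) \<le> (\<Sum>y\<in>foldl pop_step S (St j). p y)"
proof (induction j arbitrary: S)
  case 0
  have "(\<Sum>y\<in>S. Pp 0 y) = (\<Sum>y\<in>S. p y)"
    using initial_residual 0 unfolding admissible_def by (intro sum.cong) auto
  then show ?case using initial_stack by simp
next
  case (Suc j)
  have j: "Suc j \<in> {1..N}" using Suc by auto
  have IH: "admissible j S' \<Longrightarrow>
      (\<Sum>y\<in>S'. Pp j y) + (\<Sum>k\<in>{1..j}. gain k) \<le> (\<Sum>y\<in>foldl pop_step S' (St j). p y)" for S'
    using Suc by simp
  show ?case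
  proof (cases rule: step_cases[OF j])
    case 1
    have "St (Suc j) = St j" using idles_stack[OF 1] by simp
    then show ?thesis using IH admissible_idle[OF j 1 Suc.prems(2)] by fastforce
  next
    case (2 x)
    have "St (Suc j) = x # St j" using stack_pushes[OF 2] by simp
    then show ?thesis using IH admissible_pop[OF j 2 Suc.prems(2)] by fastforce
  qed
qed

lemma gain_le_greedy_pop: "(\<Sum>k\<in>{1..N}. gain k) \<le> (\<Sum>x\<in>greedy_pop feas (St N). p x)"
  using popping_collects_gain[of N "{}"] feasible_empty[of K g L N J \<beta> I \<alpha>]
  unfolding greedy_pop_def admissible_def by simp

lemma narrow_part_le:
  assumes "F \<subseteq> M" "feas F"
  shows "(\<Sum>x\<in>F \<inter> Mn. p x) \<le> ratio * (\<Sum>x\<in>greedy_pop feas (St N). p x)"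
proof -
  have "(\<Sum>x\<in>F \<inter> Mn. p x) \<le> ratio * (\<Sum>k\<in>{1..N}. gain k)"
    by (rule narrow_feasible_le_gain) (use feas_subset[OF assms(2) _ assms(1)] in auto)
  also have "\<dots> \<le> ratio * (\<Sum>x\<in>greedy_pop feas (St N). p x)"
    using gain_le_greedy_pop by (intro mult_left_mono) auto
  finally show ?thesis .
qed

lemma wide_part_le:
  assumes "F \<subseteq> M" "feas F"
  shows "(\<Sum>x\<in>F - Mn. p x) \<le> opt_value (M - Mn) feas p"
  by (rule opt_value_ge[OF finite_Diff[OF finite_pairs]])
    (use assms(1) feas_subset[OF assms(2) _ assms(1)] in auto)

end

text \<open>An optimal solution of (P1) splits into a narrow part, worth at most \<open>ratio\<close> times the
  value of Algorithm IIa, and a wide part, worth at most the exact optimum over the wide pairs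
  and empty if there are none.\<close>

theorem corollary1:
  fixes K L N T J \<Delta> :: nat
    and g :: "nat \<Rightarrow> nat"
    and p :: "pair \<Rightarrow> real"
    and \<beta> :: "nat \<Rightarrow> pair \<Rightarrow> real"
    and I :: "'q set"
    and \<alpha> :: "'q \<Rightarrow> pair \<Rightarrow> nat"
    and Pp :: "nat \<Rightarrow> pair \<Rightarrow> real"
    and St :: "nat \<Rightarrow> pair list"
  assumes part: "\<forall>k\<in>{1..K}. g k \<in> {1..L}"
    and groups_nonempty: "\<forall>s\<in>{1..L}. groupset K g s \<noteq> {}"
    and finI: "finite I"
    and p_nonneg: "\<forall>x\<in>pairs K g L T N. p x \<ge> 0"
    and beta_range: "\<forall>x\<in>pairs K g L T N. \<forall>q\<in>{1..J}. 0 \<le> \<beta> q x \<and> \<beta> q x \<le> 1"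
    and alpha_bin: "\<forall>x\<in>pairs K g L T N. \<forall>q\<in>I. \<alpha> q x \<in> {0, 1}"
    and alpha_sum: "\<forall>x\<in>pairs K g L T N. (\<Sum>q\<in>I. \<alpha> q x) \<le> \<Delta>"
    and run: "algIIa_run (narrow J \<beta> (pairs K g L T N)) p (conflicts K g L I \<alpha>)
                (maxbeta J \<beta>) N Pp St"
  defines "Mwide \<equiv> pairs K g L T N - narrow J \<beta> (pairs K g L T N)"
    and "Wopt \<equiv> opt_value (pairs K g L T N) (feasible K g L N J \<beta> I \<alpha>) p"
    and "W \<equiv> max (\<Sum>x\<in>greedy_pop (feasible K g L N J \<beta> I \<alpha>) (St N). p x)
                 (opt_value (pairs K g L T N - narrow J \<beta> (pairs K g L T N))
                            (feasible K g L N J \<beta> I \<alpha>) p)"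
  shows "(Mwide = {} \<longrightarrow> W \<ge> Wopt / (1 + real T + real \<Delta> + 2 * real J)) \<and>
         (Mwide \<noteq> {} \<longrightarrow> W \<ge> Wopt / (2 + real T + real \<Delta> + 2 * real J))"
proof -
  interpret algIIa_execution K L N T J \<Delta> g p \<beta> I \<alpha> Pp St
    by unfold_locales (use finI beta_range alpha_bin alpha_sum run in auto)
  obtain F where F: "F \<subseteq> M" "feas F" and Wopt: "Wopt = (\<Sum>x\<in>F. p x)"
    using opt_value_attained[of M feas p, OF finite_pairs feasible_empty]
    unfolding Wopt_def by blast
  have "finite F" using F(1) finite_pairs by (rule finite_subset)
  then have split: "Wopt = (\<Sum>x\<in>F \<inter> Mn. p x) + (\<Sum>x\<in>F - Mn. p x)"
    using Wopt sum.Int_Diff by blast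
  have "0 \<le> real T + real \<Delta> + 2 * real J" by simp
  then have ratio_pos: "0 < ratio" by linarith
  have "ratio * (\<Sum>x\<in>greedy_pop feas (St N). p x) \<le> ratio * W"
    using ratio_pos unfolding W_def by (intro mult_left_mono) auto
  then have narrow_part: "(\<Sum>x\<in>F \<inter> Mn. p x) \<le> ratio * W"
    using narrow_part_le[OF F] by linarith
  have wide_part: "(\<Sum>x\<in>F - Mn. p x) \<le> W" using wide_part_le[OF F] unfolding W_def by linarith
  show ?thesis
  proof (intro conjI impI)
    assume "Mwide = {}"
    then have "F - Mn = {}" using F(1) unfolding Mwide_def by blast
    then have "Wopt \<le> ratio * W" using split narrow_part by (metis add_0_right sum.empty)
    then show "Wopt / ratio \<le> W" using ratio_pos by (simp add: pos_divide_le_eq mult.commute)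
  next
    have "Wopt \<le> W * (2 + real T + real \<Delta> + 2 * real J)"
      using split narrow_part wide_part by (simp add: algebra_simps)
    then show "Wopt / (2 + real T + real \<Delta> + 2 * real J) \<le> W"
      using ratio_pos by (simp add: pos_divide_le_eq)
  qed
qed

end
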